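(* Let $q$ be a prime power, $n\geq 1$, and $c\in\mathbb{F}_q\setminus\{1\}$. Let $f_1,\ldots,f_n:\mathbb{F}_q\to\mathbb{F}_q$ be perfect $c$-nonlinear functions. Let $\{\beta_1,\ldots,\beta_n\}$ be a basis of $\mathbb{F}_{q^n}$ over $\mathbb{F}_q$, let $A$ be the $n\times n$ matrix with $(i,j)$ entry $\beta_i^{q^{j-1}}$, write $A^{-1}=(a_{i,j})_{i,j}$, and for $1\leq k\leq n$ let $L_k(x)=\sum_{i=1}^n a_{i,k}x^{q^{i-1}}$. Then $F:\mathbb{F}_{q^n}\to\mathbb{F}_{q^n}$, $F(x)=\sum_{k=1}^n\beta_k f_k(L_k(x))$, is perfect $c$-nonlinear.
   Context: For a finite field $K$, a function $h:K\to K$ and $c\in K$, let ${}_c\Delta_h(a,b)=\#\{x\in K: h(x+a)-ch(x)=b\}$ and the $c$-differential uniformity is $\delta_{h,c}=\max\{{}_c\Delta_h(a,b): a,b\in K,\ a\neq 0\text{ if } c=1\}$. $h$ is perfect $c$-nonlinear (PcN) if $\delta_{h,c}=1$. *)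

theory Defs
  imports "HOL-Computational_Algebra.Primes" "HOL-Library.FuncSet"
begin

definition cDelta :: "'a::field set \<Rightarrow> ('a \<Rightarrow> 'a) \<Rightarrow> 'a \<Rightarrow> 'a \<Rightarrow> 'a \<Rightarrow> nat" where
  "cDelta K h c a b = card {x \<in> K. h (x + a) - c * h x = b}"

definition c_diff_unif :: "'a::field set \<Rightarrow> ('a \<Rightarrow> 'a) \<Rightarrow> 'a \<Rightarrow> nat" where
  "c_diff_unif K h c = Max {cDelta K h c a b | a b. a \<in> K \<and> b \<in> K \<and> (c = 1 \<longrightarrow> a \<noteq> 0)}"

definition PcN :: "'a::field set \<Rightarrow> ('a \<Rightarrow> 'a) \<Rightarrow> 'a \<Rightarrow> bool" where
  "PcN K h c \<longleftrightarrow> c_diff_unif K h c = 1"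

text \<open>The subfield F_q of a finite field: the set of roots of x^q - x.\<close>
definition subfield_q :: "nat \<Rightarrow> 'a::field set" where
  "subfield_q q = {x. x ^ q = x}"

definition is_basis_over :: "'a::field set \<Rightarrow> nat \<Rightarrow> (nat \<Rightarrow> 'a) \<Rightarrow> bool" where
  "is_basis_over K n \<beta> \<longleftrightarrow>
     (\<forall>y. \<exists>!l. l \<in> {1..n} \<rightarrow>\<^sub>E K \<and> y = (\<Sum>i=1..n. l i * \<beta> i))"

end

theory Submission
  imports Defs "HOL-Number_Theory.Residues"
begin

text \<open>Write \<open>K\<close> for \<open>F\<^sub>q\<close>. Because \<open>A\<^sup>-\<^sup>1\<close> is a right inverse of \<open>A\<close> and the Frobenius map
  \<open>x \<mapsto> x\<^sup>q\<close> is additive and fixes \<open>K\<close>, the linearized polynomial \<open>L\<^sub>k\<close> sends \<open>x\<close> to its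
  \<open>k\<close>-th coordinate in the basis \<open>\<beta>\<close>, and \<open>L\<^sub>k\<close> is additive. Hence
  \<open>F(x + a) - c F(x) = \<Sum>\<^sub>k \<beta>\<^sub>k (f\<^sub>k(L\<^sub>k x + L\<^sub>k a) - c f\<^sub>k(L\<^sub>k x))\<close> with every bracket in \<open>K\<close>, and
  comparing coordinates with \<open>b\<close> shows that \<open>L\<^sub>k x\<close> solves the \<open>c\<close>-differential equation of
  \<open>f\<^sub>k\<close> at \<open>(L\<^sub>k a, L\<^sub>k b)\<close>. That solution is unique, and the coordinates determine \<open>x\<close>.\<close>

lemma CHAR_eq_prime_of_card:
  assumes "prime p" and "card (UNIV :: 'a::{field,finite} set) = p ^ m"
  shows "CHAR('a) = p"
proof -
  have char_prime: "prime CHAR('a)"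
    using finite_imp_CHAR_pos[where ?'a='a] prime_CHAR_semidom by auto
  have "CHAR('a) dvd p ^ m"
    using CHAR_dvd_CARD[where ?'a='a] assms(2) by simp
  then have "CHAR('a) dvd p"
    using char_prime prime_dvd_power by blast
  with char_prime assms(1) show ?thesis
    by (simp add: primes_dvd_imp_eq)
qed

lemma power_power_CHAR_add:
  assumes "prime CHAR('a::comm_semiring_1)" and "q = CHAR('a) ^ e"
  shows "(x + y :: 'a) ^ (q ^ j) = x ^ (q ^ j) + y ^ (q ^ j)"
  using freshmans_dream'[OF assms(1), of "q ^ j" "e * j"] assms(2) by (simp add: power_mult)

lemma power_power_CHAR_sum:
  fixes g :: "'b \<Rightarrow> 'a::comm_semiring_1"
  assumes "prime CHAR('a)" and "q = CHAR('a) ^ e"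
  shows "sum g A ^ (q ^ j) = (\<Sum>i\<in>A. g i ^ (q ^ j))"
  using freshmans_dream_sum'[OF assms(1), of "q ^ j" "e * j"] assms(2) by (simp add: power_mult)

lemma subfield_q_power_power:
  assumes "x \<in> subfield_q q"
  shows "x ^ (q ^ j) = x"
proof (induction j)
  case (Suc j)
  have "x ^ (q ^ Suc j) = (x ^ q) ^ (q ^ j)"
    by (simp add: power_mult mult.commute)
  with assms Suc show ?case
    by (simp add: subfield_q_def)
qed simp

lemma subfield_q_mult:
  "x \<in> subfield_q q \<Longrightarrow> y \<in> subfield_q q \<Longrightarrow> x * y \<in> subfield_q q"
  by (simp add: subfield_q_def power_mult_distrib)

lemma subfield_q_diff:
  fixes x y :: "'a::field"
  assumes "prime CHAR('a)" and "q = CHAR('a) ^ e"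
    and "x \<in> subfield_q q" and "y \<in> subfield_q q"
  shows "x - y \<in> subfield_q q"
proof -
  have "x ^ q = ((x - y) + y) ^ (q ^ 1)"
    by simp
  also have "\<dots> = (x - y) ^ q + y ^ q"
    using power_power_CHAR_add[OF assms(1,2), of "x - y" y 1] by simp
  finally show ?thesis
    using assms(3,4) by (simp add: subfield_q_def eq_diff_eq)
qed

lemma is_basis_over_coordinates_unique:
  assumes "is_basis_over K n \<beta>"
    and "\<forall>k\<in>{1..n}. u k \<in> K" and "\<forall>k\<in>{1..n}. v k \<in> K"
    and "(\<Sum>k=1..n. u k * \<beta> k) = (\<Sum>k=1..n. v k * \<beta> k)"
    and "k \<in> {1..n}"
  shows "u k = v k"
proof -
  have "\<exists>!l. l \<in> {1..n} \<rightarrow>\<^sub>E K \<and> (\<Sum>k=1..n. u k * \<beta> k) = (\<Sum>i=1..n. l i * \<beta> i)"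
    using assms(1) unfolding is_basis_over_def by blast
  moreover have "restrict u {1..n} \<in> {1..n} \<rightarrow>\<^sub>E K"
    and "restrict v {1..n} \<in> {1..n} \<rightarrow>\<^sub>E K"
    using assms(2,3) by auto
  moreover have "(\<Sum>k=1..n. u k * \<beta> k) = (\<Sum>i=1..n. restrict u {1..n} i * \<beta> i)"
    and "(\<Sum>k=1..n. u k * \<beta> k) = (\<Sum>i=1..n. restrict v {1..n} i * \<beta> i)"
    using assms(4) by auto
  ultimately have "restrict u {1..n} = restrict v {1..n}"
    by blast
  then show ?thesis
    using assms(5) by (metis restrict_apply')
qed

definition linearized :: "nat \<Rightarrow> nat \<Rightarrow> (nat \<Rightarrow> nat \<Rightarrow> 'a::comm_semiring_1) \<Rightarrow> nat \<Rightarrow> 'a \<Rightarrow> 'a"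
  where "linearized q n a k x = (\<Sum>i=1..n. a i k * x ^ (q ^ (i - 1)))"

lemma linearized_add:
  assumes "prime CHAR('a::comm_semiring_1)" and "q = CHAR('a) ^ e"
  shows "linearized q n a k (x + y :: 'a) = linearized q n a k x + linearized q n a k y"
  unfolding linearized_def
  by (simp add: power_power_CHAR_add[OF assms] distrib_left sum.distrib)

lemma linearized_eq_coordinate:
  fixes l :: "nat \<Rightarrow> 'a::field"
  assumes "prime CHAR('a)" and "q = CHAR('a) ^ e"
    and l_in: "\<forall>i\<in>{1..n}. l i \<in> subfield_q q"
    and right_inverse: "\<forall>i\<in>{1..n}. \<forall>j\<in>{1..n}.
        (\<Sum>m=1..n. \<beta> i ^ (q ^ (m - 1)) * a m j) = (if i = j then 1 else 0)"
    and j: "j \<in> {1..n}"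
  shows "linearized q n a j (\<Sum>m=1..n. l m * \<beta> m) = l j"
proof -
  have "linearized q n a j (\<Sum>m=1..n. l m * \<beta> m)
      = (\<Sum>i=1..n. a i j * (\<Sum>m=1..n. l m * \<beta> m ^ (q ^ (i - 1))))"
    unfolding linearized_def power_power_CHAR_sum[OF assms(1,2)]
    using l_in by (simp add: power_mult_distrib subfield_q_power_power)
  also have "\<dots> = (\<Sum>m=1..n. l m * (\<Sum>i=1..n. \<beta> m ^ (q ^ (i - 1)) * a i j))"
    by (simp add: sum_distrib_left sum_distrib_right mult_ac) (rule sum.swap)
  also have "\<dots> = (\<Sum>m=1..n. l m * (if m = j then 1 else 0))"
    using right_inverse j by (intro sum.cong) auto
  also have "\<dots> = l j"
    using j by (simp add: if_distrib cong: if_cong)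
  finally show ?thesis .
qed

lemma linearized_coordinates:
  assumes "prime CHAR('a::field)" and "q = CHAR('a) ^ e"
    and basis: "is_basis_over (subfield_q q) n \<beta>"
    and right_inverse: "\<forall>i\<in>{1..n}. \<forall>j\<in>{1..n}.
        (\<Sum>m=1..n. \<beta> i ^ (q ^ (m - 1)) * a m j) = (if i = j then 1 else 0)"
  shows "\<forall>k\<in>{1..n}. linearized q n a k x \<in> subfield_q q"
    and "(\<Sum>k=1..n. \<beta> k * linearized q n a k x) = (x :: 'a)"
proof -
  obtain l where l: "l \<in> {1..n} \<rightarrow>\<^sub>E subfield_q q" "x = (\<Sum>m=1..n. l m * \<beta> m)"
    using basis unfolding is_basis_over_def by blast
  then have coord: "linearized q n a k x = l k" if "k \<in> {1..n}" for k
    using linearized_eq_coordinate[OF assms(1,2) _ right_inverse that] by auto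
  show "\<forall>k\<in>{1..n}. linearized q n a k x \<in> subfield_q q"
    using coord l(1) by auto
  show "(\<Sum>k=1..n. \<beta> k * linearized q n a k x) = x"
    using l(2) coord by (simp add: mult.commute)
qed

locale coordinate_forms =
  fixes K :: "'a::{field,finite} set" and n :: nat
    and \<beta> :: "nat \<Rightarrow> 'a" and L :: "nat \<Rightarrow> 'a \<Rightarrow> 'a"
  assumes basis: "is_basis_over K n \<beta>"
    and K_mult: "x \<in> K \<Longrightarrow> y \<in> K \<Longrightarrow> x * y \<in> K"
    and K_diff: "x \<in> K \<Longrightarrow> y \<in> K \<Longrightarrow> x - y \<in> K"
    and L_add: "L k (x + y) = L k x + L k y"
    and L_in: "k \<in> {1..n} \<Longrightarrow> L k x \<in> K"
    and L_span: "(\<Sum>k=1..n. \<beta> k * L k x) = x"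
begin

lemma differential_equation_coordinates:
  assumes c: "c \<in> K" and f_maps: "\<forall>k\<in>{1..n}. \<forall>u\<in>K. f k u \<in> K"
    and sol: "(\<Sum>k=1..n. \<beta> k * f k (L k (x + a))) - c * (\<Sum>k=1..n. \<beta> k * f k (L k x)) = b"
    and k: "k \<in> {1..n}"
  shows "f k (L k x + L k a) - c * f k (L k x) = L k b"
proof -
  define g where "g k = f k (L k x + L k a) - c * f k (L k x)" for k
  have g_in: "\<forall>k\<in>{1..n}. g k \<in> K"
  proof
    fix k assume k: "k \<in> {1..n}"
    have "L k x + L k a \<in> K"
      using L_in[OF k, of "x + a"] by (simp add: L_add)
    then show "g k \<in> K"
      unfolding g_def using f_maps c k L_in by (intro K_diff K_mult) auto
  qed
  have "(\<Sum>k=1..n. g k * \<beta> k)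
      = (\<Sum>k=1..n. \<beta> k * f k (L k (x + a))) - c * (\<Sum>k=1..n. \<beta> k * f k (L k x))"
    by (simp add: g_def L_add sum_distrib_left sum_subtractf right_diff_distrib mult_ac)
  also have "\<dots> = (\<Sum>k=1..n. L k b * \<beta> k)"
    using sol L_span[of b] by (simp add: mult.commute)
  finally have coord_eq: "(\<Sum>k=1..n. g k * \<beta> k) = (\<Sum>k=1..n. L k b * \<beta> k)" .
  have "\<forall>k\<in>{1..n}. L k b \<in> K"
    using L_in by blast
  from is_basis_over_coordinates_unique[OF basis g_in this coord_eq k] show ?thesis
    by (simp add: g_def)
qed

lemma cDelta_sum_le_1:
  assumes c: "c \<in> K" and f_maps: "\<forall>k\<in>{1..n}. \<forall>u\<in>K. f k u \<in> K"
    and f_le: "\<forall>k\<in>{1..n}. \<forall>u\<in>K. \<forall>v\<in>K. cDelta K (f k) c u v \<le> 1"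
  shows "cDelta UNIV (\<lambda>x. \<Sum>k=1..n. \<beta> k * f k (L k x)) c a b \<le> 1"
proof -
  let ?S = "{x \<in> UNIV. (\<Sum>k=1..n. \<beta> k * f k (L k (x + a)))
                         - c * (\<Sum>k=1..n. \<beta> k * f k (L k x)) = b}"
  have S_unique: "x = y" if x: "x \<in> ?S" and y: "y \<in> ?S" for x y
  proof -
    have "L k x = L k y" if k: "k \<in> {1..n}" for k
    proof -
      let ?T = "{u \<in> K. f k (u + L k a) - c * f k u = L k b}"
      have "cDelta K (f k) c (L k a) (L k b) \<le> 1"
        using f_le k L_in[OF k, of a] L_in[OF k, of b] by blast
      then have "card ?T \<le> 1"
        unfolding cDelta_def .
      then have T_subsingleton: "\<forall>u\<in>?T. \<forall>v\<in>?T. u = v"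
        by (simp only: One_nat_def card_le_Suc0_iff_eq[OF finite])
      have L_in_T: "L k z \<in> ?T" if "z \<in> ?S" for z
        using differential_equation_coordinates[OF c f_maps _ k, of z a b] that L_in[OF k, of z]
        by simp
      show ?thesis
        by (rule T_subsingleton[rule_format, OF L_in_T[OF x] L_in_T[OF y]])
    qed
    then have "(\<Sum>k=1..n. \<beta> k * L k x) = (\<Sum>k=1..n. \<beta> k * L k y)"
      by simp
    then show "x = y"
      by (simp only: L_span)
  qed
  have "card ?S \<le> Suc 0"
    unfolding card_le_Suc0_iff_eq[OF finite] by (intro ballI S_unique)
  then show ?thesis
    unfolding cDelta_def by simp
qed

end

lemma finite_cDelta_values:
  fixes h :: "'a::{field,finite} \<Rightarrow> 'a"
  shows "finite {cDelta K h c a b |a b. P a b}"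
proof (rule finite_subset)
  show "{cDelta K h c a b |a b. P a b} \<subseteq> range (\<lambda>(a, b). cDelta K h c a b)"
    by auto
qed simp

lemma cDelta_le_c_diff_unif:
  fixes h :: "'a::{field,finite} \<Rightarrow> 'a"
  assumes "a \<in> K" and "b \<in> K" and "c = 1 \<longrightarrow> a \<noteq> 0"
  shows "cDelta K h c a b \<le> c_diff_unif K h c"
  unfolding c_diff_unif_def
  by (rule Max_ge[OF finite_cDelta_values]) (use assms in auto)

lemma PcN_imp_cDelta_le_1:
  fixes h :: "'a::{field,finite} \<Rightarrow> 'a"
  assumes "PcN K h c" and "c \<noteq> 1" and "a \<in> K" and "b \<in> K"
  shows "cDelta K h c a b \<le> 1"
proof -
  have "cDelta K h c a b \<le> c_diff_unif K h c"
    using assms(2-4) by (intro cDelta_le_c_diff_unif) simp_all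
  with assms(1) show ?thesis
    unfolding PcN_def by simp
qed

lemma PcN_UNIV_iff:
  fixes h :: "'a::{field,finite} \<Rightarrow> 'a"
  assumes "c \<noteq> 1"
  shows "PcN UNIV h c \<longleftrightarrow> (\<forall>a b. cDelta UNIV h c a b \<le> 1)"
proof
  assume "PcN UNIV h c"
  then show "\<forall>a b. cDelta UNIV h c a b \<le> 1"
    using PcN_imp_cDelta_le_1[OF _ assms] by simp
next
  assume le_1: "\<forall>a b. cDelta UNIV h c a b \<le> 1"
  have "0 \<in> {x \<in> UNIV. h (x + 0) - c * h x = h 0 - c * h 0}"
    by simp
  then have "card {x \<in> UNIV. h (x + 0) - c * h x = h 0 - c * h 0} > 0"
    by (auto simp: card_gt_0_iff)
  then have attained: "cDelta UNIV h c 0 (h 0 - c * h 0) = 1"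
    using le_1[rule_format, of 0 "h 0 - c * h 0"] unfolding cDelta_def by linarith
  show "PcN UNIV h c"
    unfolding PcN_def c_diff_unif_def
  proof (rule Max_eqI[OF finite_cDelta_values])
    show "y \<le> 1" if "y \<in> {cDelta UNIV h c a b |a b. a \<in> UNIV \<and> b \<in> UNIV \<and> (c = 1 \<longrightarrow> a \<noteq> 0)}" for y
      using that le_1 by auto
    show "1 \<in> {cDelta UNIV h c a b |a b. a \<in> UNIV \<and> b \<in> UNIV \<and> (c = 1 \<longrightarrow> a \<noteq> 0)}"
      using attained assms by (intro CollectI exI[of _ 0] exI[of _ "h 0 - c * h 0"]) simp
  qed
qed

theorem corollary3p2:
  fixes q n :: nat and c :: "'b::{field,finite}"
    and f :: "nat \<Rightarrow> 'b \<Rightarrow> 'b" and \<beta> :: "nat \<Rightarrow> 'b" and a :: "nat \<Rightarrow> nat \<Rightarrow> 'b"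
  assumes q_pp: "\<exists>p k. prime p \<and> k > 0 \<and> q = p ^ k"
    and n_pos: "n \<ge> 1"
    and card_field: "card (UNIV :: 'b set) = q ^ n"
    and c_in: "c \<in> subfield_q q" and c_ne: "c \<noteq> 1"
    and f_maps: "\<forall>k\<in>{1..n}. \<forall>x\<in>subfield_q q. f k x \<in> subfield_q q"
    and f_PcN: "\<forall>k\<in>{1..n}. PcN (subfield_q q) (f k) c"
    and basis: "is_basis_over (subfield_q q) n \<beta>"
    and inv_right: "\<forall>i\<in>{1..n}. \<forall>j\<in>{1..n}.
        (\<Sum>m=1..n. \<beta> i ^ (q ^ (m - 1)) * a m j) = (if i = j then 1 else 0)"
    and inv_left: "\<forall>i\<in>{1..n}. \<forall>j\<in>{1..n}.
        (\<Sum>m=1..n. a i m * \<beta> m ^ (q ^ (j - 1))) = (if i = j then 1 else 0)"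
  shows "PcN UNIV
           (\<lambda>x. \<Sum>k=1..n. \<beta> k * f k (\<Sum>i=1..n. a i k * x ^ (q ^ (i - 1)))) c"
proof -
  obtain p e where p: "prime p" and q: "q = p ^ e"
    using q_pp by blast
  have "CHAR('b) = p"
    using CHAR_eq_prime_of_card[OF p, of "e * n"] card_field q by (simp add: power_mult)
  then have char_prime: "prime CHAR('b)" and q_char: "q = CHAR('b) ^ e"
    using p q by simp_all
  interpret coordinate_forms "subfield_q q" n \<beta> "linearized q n a"
    using basis subfield_q_mult subfield_q_diff[OF char_prime q_char]
      linearized_add[OF char_prime q_char]
      linearized_coordinates[OF char_prime q_char basis inv_right]
    by unfold_locales auto
  have f_le: "\<forall>k\<in>{1..n}. \<forall>u\<in>subfield_q q. \<forall>v\<in>subfield_q q. cDelta (subfield_q q) (f k) c u v \<le> 1"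
    using f_PcN PcN_imp_cDelta_le_1[OF _ c_ne] by simp
  show ?thesis
    unfolding PcN_UNIV_iff[OF c_ne] linearized_def[symmetric]
    using cDelta_sum_le_1[OF c_in f_maps f_le] by blast
qed

end
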